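(* Let $m$ and $n$ be positive integers, let $x$ be a real number, and put $\lambda=n(n+2x+1)$. Then \[ \sum_{i=1}^n (x+i)^{2m-1}=\sum_{k=1}^m F^{(m)}_k(x)\,\lambda^k, \] where, for $1\le k\le m$, \[ F^{(m)}_k(x)=\frac{1}{2m}\sum_{i=k}^m \binom{2m}{2i}\binom{i}{k}\left(x+\frac12\right)^{2i-2k} B_{2m-2i}\!\left(\frac12\right). \]
   Context: The Bernoulli polynomials $B_n(x)$ are defined by the generating function $\sum_{n\ge 0} B_n(x)\frac{t^n}{n!}=\frac{t e^{xt}}{e^t-1}$. *)

theory Defs
  imports Complex_Main "HOL-Computational_Algebra.Formal_Power_Series"
begin

definition bernpoly :: "nat \<Rightarrow> real \<Rightarrow> real" where
  "bernpoly n x = fact n * fps_nth ((fps_X * fps_exp x) / (fps_exp 1 - 1)) n"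

definition F_coeff :: "nat \<Rightarrow> nat \<Rightarrow> real \<Rightarrow> real" where
  "F_coeff m k x = 1 / (2 * real m) *
     (\<Sum>i=k..m. real ((2*m) choose (2*i)) * real (i choose k) *
        (x + 1/2) ^ (2*i - 2*k) * bernpoly (2*m - 2*i) (1/2))"

end

theory Submission
  imports Defs
begin

(* Bernoulli polynomials satisfy B_N(t + 1) - B_N(t) = N t^(N-1), so the power sum telescopes to
   (B_2m(x + n + 1) - B_2m(x + 1)) / 2m. With y = x + 1/2 the two arguments are 1/2 + (y + n)
   and 1/2 + y, and s \<mapsto> B_2m(1/2 + s) is an even polynomial, since the reflection
   B_j(1 - t) = (-1)^j B_j(t) forces B_j(1/2) = 0 for odd j. As (y + n)^2 = y^2 + \<lambda>, expanding
   each (y^2 + \<lambda>)^i - y^(2i) binomially in \<lambda> yields the coefficients F_k. *)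

unbundle fps_syntax

definition expm1_div_X :: "real fps" where
  "expm1_div_X = Abs_fps (\<lambda>n. 1 / fact (Suc n))"

definition bernpoly_egf :: "real \<Rightarrow> real fps" where
  "bernpoly_egf x = fps_exp x * inverse expm1_div_X"

lemma expm1_div_X_nth_0 [simp]: "expm1_div_X $ 0 = 1"
  by (simp add: expm1_div_X_def)

lemma expm1_div_X_nonzero [simp]: "expm1_div_X \<noteq> 0"
  using expm1_div_X_nth_0 by (metis fps_zero_nth zero_neq_one)

lemma fps_exp_1_minus_1: "fps_exp 1 - 1 = fps_X * expm1_div_X"
  by (rule fps_ext) (auto simp: expm1_div_X_def fact_reduce split: nat.split)

lemma bernpoly_egf_times_expm1_div_X: "bernpoly_egf x * expm1_div_X = fps_exp x"
  by (simp add: bernpoly_egf_def mult.assoc inverse_mult_eq_1)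

lemma bernpoly_eq_egf_nth: "bernpoly n x = fact n * bernpoly_egf x $ n"
proof -
  have "(fps_X * fps_exp x) / (fps_exp 1 - 1) = (fps_exp x * fps_X) / (expm1_div_X * fps_X)"
    by (simp add: fps_exp_1_minus_1 mult.commute)
  also have "\<dots> = fps_exp x / expm1_div_X"
    by (rule fps_divide_cancel) simp
  also have "\<dots> = bernpoly_egf x"
    by (simp add: fps_divide_unit bernpoly_egf_def)
  finally show ?thesis
    by (simp add: bernpoly_def)
qed

lemma bernpoly_egf_add: "bernpoly_egf (x + h) = fps_exp h * bernpoly_egf x"
  by (simp add: bernpoly_egf_def fps_exp_add_mult mult_ac)

lemma bernpoly_egf_diff: "bernpoly_egf (x + 1) - bernpoly_egf x = fps_X * fps_exp x"
proof -
  have "(bernpoly_egf (x + 1) - bernpoly_egf x) * expm1_div_X = fps_exp x * (fps_exp 1 - 1)"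
    by (simp add: left_diff_distrib right_diff_distrib bernpoly_egf_times_expm1_div_X
        fps_exp_add_mult)
  also have "\<dots> = fps_X * fps_exp x * expm1_div_X"
    by (simp add: fps_exp_1_minus_1 mult_ac)
  finally show ?thesis
    by simp
qed

lemma expm1_div_X_compose_uminus: "expm1_div_X oo - fps_X = fps_exp (- 1) * expm1_div_X"
proof -
  have "- fps_X * (expm1_div_X oo - fps_X) = (fps_X * expm1_div_X) oo - fps_X"
    by (simp add: fps_compose_mult_distrib)
  also have "\<dots> = fps_exp (- 1) - 1"
    by (simp add: fps_exp_1_minus_1 [symmetric] fps_compose_sub_distrib)
  also have "\<dots> = - (fps_exp (- 1) * (fps_exp 1 - 1))"
    by (simp add: algebra_simps flip: fps_exp_add_mult)
  also have "\<dots> = - fps_X * (fps_exp (- 1) * expm1_div_X)"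
    by (simp add: fps_exp_1_minus_1 mult_ac)
  finally show ?thesis
    by simp
qed

lemma bernpoly_egf_reflect: "bernpoly_egf (1 - x) oo - fps_X = bernpoly_egf x"
proof -
  have "(bernpoly_egf (1 - x) oo - fps_X) * fps_exp (- 1) * expm1_div_X = fps_exp (x - 1)"
    using arg_cong [OF bernpoly_egf_times_expm1_div_X [of "1 - x"], of "\<lambda>f. f oo - fps_X"]
    by (simp add: fps_compose_mult_distrib expm1_div_X_compose_uminus mult.assoc)
  also have "\<dots> = bernpoly_egf x * fps_exp (- 1) * expm1_div_X"
    by (simp add: bernpoly_egf_times_expm1_div_X mult.commute [of _ "fps_exp (- 1)"]
        mult.assoc flip: fps_exp_add_mult)
  finally show ?thesis
    by simp
qed

lemma bernpoly_reflect: "bernpoly n (1 - x) = (- 1) ^ n * bernpoly n x"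
proof -
  have "(bernpoly_egf (1 - x) oo - fps_X) $ n = bernpoly_egf x $ n"
    by (simp add: bernpoly_egf_reflect)
  then have "bernpoly_egf (1 - x) $ n = (- 1) ^ n * bernpoly_egf x $ n"
    by (cases "even n") (auto simp: fps_compose_uminus')
  then show ?thesis
    by (simp add: bernpoly_eq_egf_nth)
qed

lemma bernpoly_odd_half: "odd n \<Longrightarrow> bernpoly n (1/2) = 0"
  using bernpoly_reflect [of n "1/2"] by simp

lemma bernpoly_add: "bernpoly n (x + h) = (\<Sum>j\<le>n. real (n choose j) * bernpoly (n - j) x * h ^ j)"
proof -
  have "bernpoly n (x + h) = (\<Sum>j\<le>n. fact n * (h ^ j / fact j * bernpoly_egf x $ (n - j)))"
    by (simp add: bernpoly_eq_egf_nth bernpoly_egf_add fps_mult_nth atLeast0AtMost sum_distrib_left)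
  also have "\<dots> = (\<Sum>j\<le>n. real (n choose j) * bernpoly (n - j) x * h ^ j)"
    by (intro sum.cong refl) (simp add: bernpoly_eq_egf_nth binomial_fact field_simps)
  finally show ?thesis .
qed

lemma bernpoly_diff:
  assumes "n \<ge> 1"
  shows "bernpoly n (x + 1) - bernpoly n x = real n * x ^ (n - 1)"
proof -
  obtain k where n: "n = Suc k"
    using assms by (cases n) auto
  have "bernpoly n (x + 1) - bernpoly n x = fact n * (bernpoly_egf (x + 1) - bernpoly_egf x) $ n"
    by (simp add: bernpoly_eq_egf_nth algebra_simps)
  then show ?thesis
    by (simp add: bernpoly_egf_diff n)
qed

lemma sum_shifted_powers_eq_bernpoly:
  assumes "N \<ge> 1"
  shows "(\<Sum>i=1..n. (x + real i) ^ (N - 1)) =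
    (bernpoly N (x + real n + 1) - bernpoly N (x + 1)) / real N"
proof -
  have step: "(x + real i) ^ (N - 1) = (bernpoly N (x + real (Suc i)) - bernpoly N (x + real i)) / real N"
    for i
    using assms bernpoly_diff [OF assms, of "x + real i"] by (simp add: field_simps add_ac)
  have "(\<Sum>i=1..n. (x + real i) ^ (N - 1)) =
      (\<Sum>i=1..n. bernpoly N (x + real (Suc i)) - bernpoly N (x + real i)) / real N"
    by (simp only: step sum_divide_distrib)
  also have "\<dots> = (bernpoly N (x + real n + 1) - bernpoly N (x + 1)) / real N"
    by (subst sum_Suc_diff) (simp_all add: add_ac)
  finally show ?thesis .
qed

lemma sum_atMost_double_odd_vanish:
  fixes g :: "nat \<Rightarrow> 'a::comm_monoid_add"
  assumes "\<And>j. odd j \<Longrightarrow> g j = 0"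
  shows "(\<Sum>j\<le>2 * m. g j) = (\<Sum>i\<le>m. g (2 * i))"
proof -
  have "(\<Sum>j\<le>2 * m. g j) = (\<Sum>j\<in>(*) 2 ` {..m}. g j)"
  proof (intro sum.mono_neutral_right ballI)
    fix j
    assume "j \<in> {..2 * m} - (*) 2 ` {..m}"
    then have "odd j"
      by (auto elim!: evenE)
    then show "g j = 0"
      by (rule assms)
  qed auto
  also have "\<dots> = (\<Sum>i\<le>m. g (2 * i))"
    by (subst sum.reindex) (auto simp: inj_on_def)
  finally show ?thesis .
qed

lemma bernpoly_even_half_add:
  "bernpoly (2 * m) (1/2 + s) =
    (\<Sum>i\<le>m. real ((2 * m) choose (2 * i)) * bernpoly (2 * m - 2 * i) (1/2) * (s ^ 2) ^ i)"
proof -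
  have "bernpoly (2 * m) (1/2 + s) =
      (\<Sum>j\<le>2 * m. real ((2 * m) choose j) * bernpoly (2 * m - j) (1/2) * s ^ j)"
    by (rule bernpoly_add)
  also have "\<dots> = (\<Sum>i\<le>m. real ((2 * m) choose (2 * i)) * bernpoly (2 * m - 2 * i) (1/2) * s ^ (2 * i))"
  proof (rule sum_atMost_double_odd_vanish)
    fix j :: nat
    assume "odd j"
    then show "real ((2 * m) choose j) * bernpoly (2 * m - j) (1/2) * s ^ j = 0"
      by (cases "j \<le> 2 * m") (simp_all add: bernpoly_odd_half binomial_eq_0)
  qed
  finally show ?thesis
    by (simp add: power_mult)
qed

lemma sum_power_add_diff_expand:
  fixes u L :: "'a::comm_ring_1"
  shows "(\<Sum>i\<le>m. c i * ((u + L) ^ i - u ^ i)) =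
    (\<Sum>k=1..m. (\<Sum>i=k..m. c i * of_nat (i choose k) * u ^ (i - k)) * L ^ k)"
proof -
  have binomial: "(u + L) ^ i - u ^ i = (\<Sum>k=1..m. of_nat (i choose k) * u ^ (i - k) * L ^ k)"
    if "i \<le> m" for i
  proof -
    have "(u + L) ^ i - u ^ i = (\<Sum>k=1..i. of_nat (i choose k) * u ^ (i - k) * L ^ k)"
      by (simp add: binomial_ring [of L u] add.commute atMost_atLeast0 sum.atLeast_Suc_atMost mult_ac)
    also have "\<dots> = (\<Sum>k=1..m. of_nat (i choose k) * u ^ (i - k) * L ^ k)"
      using that by (intro sum.mono_neutral_left) (auto simp: binomial_eq_0)
    finally show ?thesis .
  qed
  have "(\<Sum>i\<le>m. c i * ((u + L) ^ i - u ^ i)) =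
      (\<Sum>k=1..m. \<Sum>i\<le>m. c i * of_nat (i choose k) * u ^ (i - k) * L ^ k)"
    by (simp add: binomial sum_distrib_left mult_ac sum.swap [of _ "{..m}"])
  also have "\<dots> = (\<Sum>k=1..m. (\<Sum>i=k..m. c i * of_nat (i choose k) * u ^ (i - k)) * L ^ k)"
    by (intro sum.cong refl)
      (auto simp: sum_distrib_right binomial_eq_0 intro!: sum.mono_neutral_right)
  finally show ?thesis .
qed

theorem mainTheorem1:
  fixes m n :: nat and x :: real
  assumes "m \<ge> 1" and "n \<ge> 1"
  shows "(\<Sum>i=1..n. (x + real i) ^ (2*m - 1)) =
         (\<Sum>k=1..m. F_coeff m k x * (real n * (real n + 2*x + 1)) ^ k)"
proof -
  define y where "y = x + 1/2"
  define L where "L = real n * (real n + 2*x + 1)"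
  define c where "c i = real ((2*m) choose (2*i)) * bernpoly (2*m - 2*i) (1/2)" for i
  have square: "(y + real n) ^ 2 = y ^ 2 + L"
    by (simp add: y_def L_def power2_eq_square algebra_simps)
  have "(\<Sum>i=1..n. (x + real i) ^ (2*m - 1)) =
      (bernpoly (2*m) (1/2 + (y + real n)) - bernpoly (2*m) (1/2 + y)) / (2 * real m)"
    using sum_shifted_powers_eq_bernpoly [of "2*m" x n] assms(1) by (simp add: y_def add_ac)
  also have "\<dots> = (\<Sum>i\<le>m. c i * ((y ^ 2 + L) ^ i - (y ^ 2) ^ i)) / (2 * real m)"
    by (simp add: bernpoly_even_half_add square c_def sum_subtractf [symmetric] right_diff_distrib)
  also have "\<dots> = (\<Sum>k=1..m. (\<Sum>i=k..m. c i * real (i choose k) * (y ^ 2) ^ (i - k)) * L ^ k)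
      / (2 * real m)"
    by (simp only: sum_power_add_diff_expand of_nat_id)
  also have "\<dots> = (\<Sum>k=1..m. F_coeff m k x * L ^ k)"
    unfolding sum_divide_distrib F_coeff_def
    by (intro sum.cong refl) (simp add: c_def y_def power_mult [symmetric] diff_mult_distrib
        sum_distrib_left sum_distrib_right sum_divide_distrib mult_ac)
  finally show ?thesis
    by (simp add: L_def)
qed

end
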